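(* Suppose the $L$-smoothness assumption and the PL-condition with constant $\mu>0$ hold, and let $\{w_t\}_{t\ge0}$, $\{v_t\}_{t\ge0}$, $\{\hat D_t\}_{t\ge0}$ be generated by {\tt Scaled SARAH} with any step-size $\eta>0$. Then for every $t\ge0$, $$P(w_{t+1})-P^*\le\left(1-\frac{\eta\mu}{\Gamma}\right)(P(w_t)-P^* )+\frac{\eta}{2\alpha}\|\nabla P(w_t)-v_t\|^2-\left(\frac1{2\eta}-\frac{L}{2\alpha}\right)\|w_{t+1}-w_t\|^2_{\hat D_t}.$$
   Context: $P=\frac1n\sum_{i=1}^nf_i$ with $f_i:\mathbb{R}^d\to\mathbb{R}$, assumed to have a minimizer $w^*$, $P^*=P(w^* )$. $L$-smoothness assumption: each $f_i$ and $P$ are twice differentiable with $L$-Lipschitz gradients. PL-condition: $\|\nabla P(w)\|^2\ge2\mu(P(w)-P^* )$ for all $w$. $\Gamma=\sqrt d\,L$. $\|x\|_D^2=x^TDx$. For $J\subseteq[n]$, $\nabla^2P_J(w)=\frac1{|J|}\sum_{j\in J}\nabla^2 f_j(w)$; $\odot$ is the Hadamard product; $\mathrm{diag}(x)$ is the diagonal matrix with the entries of $x$. Preconditioner (parameters $\alpha>0$, $\beta\in(0,1)$, $m\ge1$): $D_0=\frac1m\sum_{j=1}^m\mathrm{diag}(z_j\odot\nabla^2P_{\mathcal{J}_j}(w_0)z_j)$, $D_t=\beta D_{t-1}+(1-\beta)\mathrm{diag}(z_t\odot\nabla^2P_{\mathcal{J}_t}(w_t)z_t)$ for $t\ge1$,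 with independent Rademacher vectors $z$ and random index sets $\mathcal{J}\subseteq[n]$; $\hat D_t$ diagonal with $(\hat D_t)_{ii}=\max\{\alpha,|(D_t)_{ii}|\}$. {\tt Scaled SARAH} (input $w_0$, $\eta$, $p\in(0,1]$): $v_0=\nabla P(w_0)$; for $t\ge0$: $w_{t+1}=w_t-\eta\hat D_t^{-1}v_t$; draw $i_{t+1}$ uniformly from $[n]$; with probability $p$, $v_{t+1}=\nabla P(w_{t+1})$, otherwise $v_{t+1}=v_t+\nabla f_{i_{t+1}}(w_{t+1})-\nabla f_{i_{t+1}}(w_t)$; update $\hat D_{t+1}$.
   Formalization: The preconditioner parameter alpha satisfies alpha <= Gamma = sqrt(d) L besides alpha > 0. The paper assumes this as well. *)

theory Defs
  imports "HOL-Analysis.Analysis"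
begin

definition avg_fun :: "nat \<Rightarrow> (nat \<Rightarrow> 'a \<Rightarrow> real) \<Rightarrow> 'a \<Rightarrow> real" where
  "avg_fun n f x = (1 / real n) * (\<Sum>i<n. f i x)"

definition avg_grad :: "nat \<Rightarrow> (nat \<Rightarrow> 'a \<Rightarrow> real^'d) \<Rightarrow> 'a \<Rightarrow> real^'d" where
  "avg_grad n g x = (1 / real n) *\<^sub>R (\<Sum>i<n. g i x)"

definition hessJ :: "(nat \<Rightarrow> real^'d \<Rightarrow> real^'d^'d) \<Rightarrow> nat set \<Rightarrow> real^'d \<Rightarrow> real^'d^'d" where
  "hessJ H J x = (1 / real (card J)) *\<^sub>R (\<Sum>j\<in>J. H j x)"

text \<open>Diagonal of diag(z \<odot> A z), stored as a vector.\<close>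
definition hutch :: "real^'d^'d \<Rightarrow> real^'d \<Rightarrow> real^'d" where
  "hutch A z = (\<chi> k. z $ k * (A *v z) $ k)"

text \<open>Weighted squared norm ||x||_D^2 = x^T D x for the diagonal matrix D with diagonal vector Dv.\<close>
definition wnorm2 :: "real^'d \<Rightarrow> real^'d \<Rightarrow> real" where
  "wnorm2 Dv x = (\<Sum>k\<in>UNIV. Dv $ k * (x $ k)^2)"

end

theory Submission
  imports Defs
begin

text \<open>
  The step is analysed one coordinate at a time. By the descent lemma,
  \<open>P(w\<^sub>t\<^sub>+\<^sub>1) \<le> P(w\<^sub>t) + \<langle>a, \<Delta>\<rangle> + L/2 \<parallel>\<Delta>\<parallel>\<^sup>2\<close> with \<open>a = \<nabla>P(w\<^sub>t)\<close> and
  \<open>\<Delta>\<^sub>k = -\<eta> v\<^sub>k / d\<^sub>k\<close>, and completing the square gives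
  \<open>a\<^sub>k \<Delta>\<^sub>k + d\<^sub>k \<Delta>\<^sub>k\<^sup>2 / (2\<eta>) = \<eta> / (2 d\<^sub>k) ((a\<^sub>k - v\<^sub>k)\<^sup>2 - a\<^sub>k\<^sup>2)\<close>.
  The bounds \<open>\<alpha> \<le> d\<^sub>k \<le> \<Gamma>\<close> turn this into the claimed estimate, and PL replaces
  \<open>\<parallel>a\<parallel>\<^sup>2\<close> by \<open>2\<mu>(P(w\<^sub>t) - P\<^sup>*)\<close>. The upper bound \<open>\<Gamma>\<close> holds because each Hessian,
  being the derivative of an \<open>L\<close>-Lipschitz gradient, has operator norm at most \<open>L\<close>,
  so every Hutchinson sample \<open>z \<odot> \<nabla>\<^sup>2P\<^sub>J z\<close> has entries bounded by \<open>\<parallel>z\<parallel> L = \<Gamma>\<close>,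
  and averages and exponential moving averages preserve such a bound.
\<close>

lemma lipschitz_has_derivative_bound:
  fixes G :: "'a::real_normed_vector \<Rightarrow> 'b::real_normed_vector"
  assumes der: "(G has_derivative G') (at x)"
    and lip: "\<forall>x y. norm (G x - G y) \<le> L * norm (x - y)"
  shows "norm (G' h) \<le> L * norm h"
proof -
  define \<phi> where "\<phi> s = G (x + s *\<^sub>R h)" for s :: real
  define err where "err = (\<lambda>s. norm (\<phi> s - \<phi> 0 - s *\<^sub>R G' h) / \<bar>s\<bar>)"
  have "((\<lambda>s. x + s *\<^sub>R h) has_derivative (\<lambda>s. s *\<^sub>R h)) (at 0)"
    by (auto intro!: derivative_eq_intros)
  moreover have "(G has_derivative G') (at (x + 0 *\<^sub>R h))"
    using der by simp
  ultimately have "(\<phi> has_derivative (\<lambda>s. G' (s *\<^sub>R h))) (at 0)"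
    unfolding \<phi>_def by (rule has_derivative_compose)
  then have "(\<phi> has_derivative (\<lambda>s. s *\<^sub>R G' h)) (at 0)"
    by (simp add: linear_cmul[OF has_derivative_linear[OF der]])
  then have "err \<midarrow>0\<rightarrow> 0"
    by (simp add: has_derivative_at err_def)
  then have lim: "((\<lambda>s. L * norm h + err s) \<longlongrightarrow> L * norm h) (at 0)"
    by (auto intro: tendsto_eq_intros)
  have "norm (G' h) \<le> L * norm h + err s" if "s \<noteq> 0" for s
  proof -
    have "\<bar>s\<bar> * norm (G' h) \<le> norm (\<phi> s - \<phi> 0) + norm (\<phi> s - \<phi> 0 - s *\<^sub>R G' h)"
      using norm_triangle_ineq4[of "\<phi> s - \<phi> 0" "\<phi> s - \<phi> 0 - s *\<^sub>R G' h"] by simp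
    also have "norm (\<phi> s - \<phi> 0) \<le> \<bar>s\<bar> * (L * norm h)"
      using lip[rule_format, of "x + s *\<^sub>R h" x] by (simp add: \<phi>_def mult_ac)
    finally show ?thesis
      using that by (simp add: err_def field_simps)
  qed
  then show ?thesis
    by (intro tendsto_lowerbound[OF lim]) (auto simp: eventually_at_filter)
qed

lemma descent_lemma:
  fixes F :: "'a::real_inner \<Rightarrow> real" and G :: "'a \<Rightarrow> 'a"
  assumes der: "\<forall>x. (F has_derivative (\<lambda>h. G x \<bullet> h)) (at x)"
    and lip: "\<forall>x y. norm (G x - G y) \<le> L * norm (x - y)"
  shows "F y \<le> F x + G x \<bullet> (y - x) + L / 2 * (norm (y - x))\<^sup>2"
proof -
  define d where "d = y - x"
  define \<phi> where "\<phi> s = F (x + s *\<^sub>R d) - s * (G x \<bullet> d) - L / 2 * s\<^sup>2 * (norm d)\<^sup>2" for s :: real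
  have \<phi>_deriv: "(\<phi> has_real_derivative (G (x + s *\<^sub>R d) \<bullet> d - G x \<bullet> d - L * s * (norm d)\<^sup>2)) (at s)"
    for s
  proof -
    have "((\<lambda>s::real. x + s *\<^sub>R d) has_derivative (\<lambda>s. s *\<^sub>R d)) (at s)"
      by (auto intro!: derivative_eq_intros)
    from has_derivative_compose[OF this der[rule_format]]
    have "((\<lambda>s. F (x + s *\<^sub>R d)) has_real_derivative (G (x + s *\<^sub>R d) \<bullet> d)) (at s)"
      by (simp add: has_field_derivative_def mult_commute_abs)
    then show ?thesis
      unfolding \<phi>_def by (auto intro!: derivative_eq_intros)
  qed
  have slope_nonpos: "G (x + s *\<^sub>R d) \<bullet> d - G x \<bullet> d - L * s * (norm d)\<^sup>2 \<le> 0"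
    if "0 \<le> s" for s
  proof -
    have "G (x + s *\<^sub>R d) \<bullet> d - G x \<bullet> d \<le> norm (G (x + s *\<^sub>R d) - G x) * norm d"
      by (metis inner_diff_left norm_cauchy_schwarz)
    also have "\<dots> \<le> L * s * norm d * norm d"
      using lip[rule_format, of "x + s *\<^sub>R d" x] that
      by (intro mult_right_mono) (auto simp: mult.assoc)
    finally show ?thesis
      by (simp add: power2_eq_square mult.assoc)
  qed
  have "\<phi> 1 \<le> \<phi> 0"
    using DERIV_nonpos_imp_nonincreasing[of 0 1 \<phi>] \<phi>_deriv slope_nonpos by force
  then show ?thesis
    by (simp add: \<phi>_def d_def)
qed

lemma sum_matrix_vector_mult:
  fixes A :: "'i \<Rightarrow> real^'n^'m"
  shows "(\<Sum>j\<in>J. A j) *v h = (\<Sum>j\<in>J. A j *v h)"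
  by (induction J rule: infinite_finite_induct) (auto simp: matrix_vector_mult_add_rdistrib)

lemma norm_hessJ_mult_le:
  fixes H :: "nat \<Rightarrow> real^'d \<Rightarrow> real^'d^'d"
  assumes "finite J" "J \<noteq> {}"
    and bound: "\<forall>j\<in>J. norm (H j x *v h) \<le> L * norm h"
  shows "norm (hessJ H J x *v h) \<le> L * norm h"
proof -
  have "norm (hessJ H J x *v h) = norm (\<Sum>j\<in>J. H j x *v h) / real (card J)"
    by (simp add: hessJ_def scaleR_matrix_vector_assoc[symmetric] sum_matrix_vector_mult)
  also have "\<dots> \<le> (\<Sum>j\<in>J. norm (H j x *v h)) / real (card J)"
    by (intro divide_right_mono norm_sum) auto
  also have "\<dots> \<le> (\<Sum>j\<in>J. L * norm h) / real (card J)"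
    using bound by (intro divide_right_mono sum_mono) auto
  also have "\<dots> = L * norm h"
    using assms(1,2) by simp
  finally show ?thesis .
qed

lemma norm_sign_vector:
  fixes z :: "real^'d"
  assumes "\<forall>k. z $ k \<in> {-1, 1}"
  shows "norm z = sqrt (real CARD('d))"
proof -
  have "(z $ k)\<^sup>2 = 1" for k
    using assms by (metis insert_iff empty_iff power2_minus one_power2)
  then show ?thesis
    by (simp add: norm_vec_def L2_set_def)
qed

lemma abs_hutch_le:
  fixes A :: "real^'d^'d" and z :: "real^'d"
  assumes z: "\<forall>k. z $ k \<in> {-1, 1}" and A: "\<forall>h. norm (A *v h) \<le> L * norm h"
  shows "\<bar>hutch A z $ k\<bar> \<le> sqrt (real CARD('d)) * L"
proof -
  have "\<bar>hutch A z $ k\<bar> = \<bar>(A *v z) $ k\<bar>"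
    using z[rule_format, of k] by (auto simp: hutch_def abs_mult)
  also have "\<dots> \<le> norm (A *v z)"
    by (rule component_le_norm_cart)
  also have "\<dots> \<le> L * norm z"
    using A by blast
  finally show ?thesis
    by (simp add: norm_sign_vector[OF z] mult.commute)
qed

lemma abs_moving_average_le:
  fixes D u :: "nat \<Rightarrow> real^'d" and u0 :: "nat \<Rightarrow> real^'d"
  assumes "m \<ge> 1" "0 \<le> \<beta>" "\<beta> \<le> 1"
    and u0: "\<forall>j k. \<bar>u0 j $ k\<bar> \<le> C" and u: "\<forall>s k. \<bar>u s $ k\<bar> \<le> C"
    and D_0: "D 0 = (1 / real m) *\<^sub>R (\<Sum>j\<in>{1..m}. u0 j)"
    and D_Suc: "\<forall>s. D (Suc s) = \<beta> *\<^sub>R D s + (1 - \<beta>) *\<^sub>R u (Suc s)"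
  shows "\<bar>D s $ k\<bar> \<le> C"
proof (induction s)
  case 0
  have "\<bar>D 0 $ k\<bar> \<le> (\<Sum>j\<in>{1..m}. \<bar>u0 j $ k\<bar>) / real m"
    by (simp add: D_0 abs_mult divide_right_mono)
  also have "\<dots> \<le> (\<Sum>j\<in>{1..m}. C) / real m"
    using u0 by (intro divide_right_mono sum_mono) auto
  also have "\<dots> = C"
    using \<open>m \<ge> 1\<close> by simp
  finally show ?case .
next
  case (Suc s)
  have "\<bar>D (Suc s) $ k\<bar> \<le> \<beta> * \<bar>D s $ k\<bar> + (1 - \<beta>) * \<bar>u (Suc s) $ k\<bar>"
    using D_Suc assms(2,3) abs_triangle_ineq[of "\<beta> * D s $ k" "(1 - \<beta>) * u (Suc s) $ k"]
    by (simp add: abs_mult)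
  also have "\<dots> \<le> \<beta> * C + (1 - \<beta>) * C"
    using Suc u assms(2,3) by (intro add_mono mult_left_mono) auto
  finally show ?case
    by (simp add: algebra_simps)
qed

lemma scaled_coordinate_step_bound:
  fixes a b d \<Delta> \<alpha> \<Gamma> \<eta> L :: real
  assumes "0 < \<alpha>" "\<alpha> \<le> d" "d \<le> \<Gamma>" "0 < \<eta>" "0 \<le> L" and \<Delta>: "\<Delta> = - \<eta> * b / d"
  shows "a * \<Delta> + L / 2 * \<Delta>\<^sup>2 \<le> - \<eta> / (2 * \<Gamma>) * a\<^sup>2 + \<eta> / (2 * \<alpha>) * (a - b)\<^sup>2
           - (1 / (2 * \<eta>) - L / (2 * \<alpha>)) * (d * \<Delta>\<^sup>2)"
proof -
  have "d > 0" using assms by linarith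
  have "L / 2 * \<Delta>\<^sup>2 = L / (2 * \<alpha>) * (\<alpha> * \<Delta>\<^sup>2)"
    using assms by simp
  also have "\<dots> \<le> L / (2 * \<alpha>) * (d * \<Delta>\<^sup>2)"
    using assms by (intro mult_left_mono mult_right_mono) auto
  finally have curvature: "L / 2 * \<Delta>\<^sup>2 \<le> L / (2 * \<alpha>) * (d * \<Delta>\<^sup>2)" .
  have square: "a * \<Delta> + 1 / (2 * \<eta>) * (d * \<Delta>\<^sup>2) = \<eta> / (2 * d) * ((a - b)\<^sup>2 - a\<^sup>2)"
    using \<open>d > 0\<close> \<open>0 < \<eta>\<close> by (simp add: \<Delta> field_simps power2_eq_square)
  have "\<eta> / (2 * d) * (a - b)\<^sup>2 \<le> \<eta> / (2 * \<alpha>) * (a - b)\<^sup>2"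
    and "\<eta> / (2 * \<Gamma>) * a\<^sup>2 \<le> \<eta> / (2 * d) * a\<^sup>2"
    using assms \<open>d > 0\<close> by (intro mult_right_mono divide_left_mono; simp)+
  with curvature square show ?thesis
    by (simp add: algebra_simps)
qed

lemma preconditioned_step_bound:
  fixes F :: "real^'d \<Rightarrow> real" and G :: "real^'d \<Rightarrow> real^'d"
  assumes der: "\<forall>x. (F has_derivative (\<lambda>h. G x \<bullet> h)) (at x)"
    and lip: "\<forall>x y. norm (G x - G y) \<le> L * norm (x - y)"
    and PL: "2 * \<mu> * (F x - F\<^sub>0) \<le> (norm (G x))\<^sup>2"
    and d: "\<forall>k. \<alpha> \<le> d $ k \<and> d $ k \<le> \<Gamma>"
    and "0 < \<alpha>" "0 < \<eta>" "0 \<le> L"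
    and x': "x' = x - \<eta> *\<^sub>R (\<chi> k. v $ k / d $ k)"
  shows "F x' - F\<^sub>0 \<le> (1 - \<eta> * \<mu> / \<Gamma>) * (F x - F\<^sub>0) + \<eta> / (2 * \<alpha>) * (norm (G x - v))\<^sup>2
           - (1 / (2 * \<eta>) - L / (2 * \<alpha>)) * wnorm2 d (x' - x)"
proof -
  define a \<Delta> where "a = G x" and "\<Delta> = x' - x"
  have "0 < \<Gamma>"
    using d \<open>0 < \<alpha>\<close> by (meson less_le_trans)
  have norm_sq: "(norm y)\<^sup>2 = (\<Sum>k\<in>UNIV. (y $ k)\<^sup>2)" for y :: "real^'d"
    unfolding power2_norm_eq_inner inner_vec_def by (simp add: power2_eq_square)
  have "a \<bullet> \<Delta> + L / 2 * (norm \<Delta>)\<^sup>2 = (\<Sum>k\<in>UNIV. a $ k * \<Delta> $ k + L / 2 * (\<Delta> $ k)\<^sup>2)"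
    by (simp add: inner_vec_def norm_sq sum.distrib sum_distrib_left)
  also have "\<dots> \<le> (\<Sum>k\<in>UNIV. - \<eta> / (2 * \<Gamma>) * (a $ k)\<^sup>2 + \<eta> / (2 * \<alpha>) * (a $ k - v $ k)\<^sup>2
                    - (1 / (2 * \<eta>) - L / (2 * \<alpha>)) * (d $ k * (\<Delta> $ k)\<^sup>2))"
    using d assms(5-7) by (intro sum_mono scaled_coordinate_step_bound) (auto simp: \<Delta>_def x')
  also have "\<dots> = - \<eta> / (2 * \<Gamma>) * (norm a)\<^sup>2 + \<eta> / (2 * \<alpha>) * (norm (a - v))\<^sup>2
                    - (1 / (2 * \<eta>) - L / (2 * \<alpha>)) * wnorm2 d \<Delta>"
    by (simp add: norm_sq wnorm2_def sum.distrib sum_subtractf sum_distrib_left sum_negf)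
  finally have step: "a \<bullet> \<Delta> + L / 2 * (norm \<Delta>)\<^sup>2 \<le> \<dots>" .
  have "\<eta> * \<mu> / \<Gamma> * (F x - F\<^sub>0) = \<eta> / (2 * \<Gamma>) * (2 * \<mu> * (F x - F\<^sub>0))"
    by simp
  also have "\<dots> \<le> \<eta> / (2 * \<Gamma>) * (norm a)\<^sup>2"
    using PL \<open>0 < \<eta>\<close> \<open>0 < \<Gamma>\<close> by (intro mult_left_mono) (auto simp: a_def)
  finally have "\<eta> * \<mu> / \<Gamma> * (F x - F\<^sub>0) \<le> \<eta> / (2 * \<Gamma>) * (norm a)\<^sup>2" .
  with descent_lemma[OF der lip, of x' x] step show ?thesis
    by (simp add: a_def \<Delta>_def algebra_simps)
qed

lemma avg_fun_has_derivative:
  assumes "\<forall>i<n. (f i has_derivative (\<lambda>h. g i x \<bullet> h)) (at x)"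
  shows "(avg_fun n f has_derivative (\<lambda>h. avg_grad n g x \<bullet> h)) (at x)"
proof -
  have "((\<lambda>x. (1 / real n) * (\<Sum>i<n. f i x)) has_derivative
          (\<lambda>h. (1 / real n) * (\<Sum>i<n. g i x \<bullet> h))) (at x)"
    using assms by (intro has_derivative_mult_right has_derivative_sum) auto
  then show ?thesis
    by (simp add: avg_fun_def[abs_def] avg_grad_def inner_sum_left)
qed

theorem lemma3:
  fixes f :: "nat \<Rightarrow> real^'d \<Rightarrow> real"
    and g :: "nat \<Rightarrow> real^'d \<Rightarrow> real^'d"
    and H :: "nat \<Rightarrow> real^'d \<Rightarrow> real^'d^'d"
    and n m :: nat
    and L \<mu> \<alpha> \<beta> \<eta> p :: real
    and wstar :: "real^'d"
    and w v D Dh :: "nat \<Rightarrow> real^'d"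
    and z0 z :: "nat \<Rightarrow> real^'d"
    and J0 J :: "nat \<Rightarrow> nat set"
    and t :: nat
  assumes n_pos: "n \<ge> 1"
    and grad_f: "\<forall>i<n. \<forall>x. (f i has_derivative (\<lambda>h. g i x \<bullet> h)) (at x)"
    and hess_f: "\<forall>i<n. \<forall>x. (g i has_derivative (\<lambda>h. H i x *v h)) (at x)"
    and smooth_f: "\<forall>i<n. \<forall>x y. norm (g i x - g i y) \<le> L * norm (x - y)"
    and smooth_P: "\<forall>x y. norm (avg_grad n g x - avg_grad n g y) \<le> L * norm (x - y)"
    and minimizer: "\<forall>x. avg_fun n f wstar \<le> avg_fun n f x"
    and PL: "\<forall>x. (norm (avg_grad n g x))^2 \<ge> 2 * \<mu> * (avg_fun n f x - avg_fun n f wstar)"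
    and mu_pos: "\<mu> > 0"
    and alpha_pos: "\<alpha> > 0"
    and alpha_le_Gamma: "\<alpha> \<le> sqrt (real CARD('d)) * L"
    and beta: "0 < \<beta>" "\<beta> < 1"
    and m_pos: "m \<ge> 1"
    and eta_pos: "\<eta> > 0"
    and p: "0 < p" "p \<le> 1"
    and z0_rad: "\<forall>j k. z0 j $ k \<in> {-1, 1}"
    and z_rad: "\<forall>s k. z s $ k \<in> {-1, 1}"
    and J0_idx: "\<forall>j. J0 j \<subseteq> {..<n} \<and> J0 j \<noteq> {}"
    and J_idx: "\<forall>s. J s \<subseteq> {..<n} \<and> J s \<noteq> {}"
    and D_0: "D 0 = (1 / real m) *\<^sub>R (\<Sum>j\<in>{1..m}. hutch (hessJ H (J0 j) (w 0)) (z0 j))"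
    and D_Suc: "\<forall>s. D (Suc s) = \<beta> *\<^sub>R D s
                   + (1 - \<beta>) *\<^sub>R hutch (hessJ H (J (Suc s)) (w (Suc s))) (z (Suc s))"
    and Dh_def: "\<forall>s. Dh s = (\<chi> k. max \<alpha> \<bar>D s $ k\<bar>)"
    and w_Suc: "\<forall>s. w (Suc s) = w s - \<eta> *\<^sub>R (\<chi> k. v s $ k / Dh s $ k)"
    and v_0: "v 0 = avg_grad n g (w 0)"
    and v_Suc: "\<forall>s. v (Suc s) = avg_grad n g (w (Suc s))
                   \<or> (\<exists>i<n. v (Suc s) = v s + g i (w (Suc s)) - g i (w s))"
  shows "avg_fun n f (w (Suc t)) - avg_fun n f wstar
           \<le> (1 - \<eta> * \<mu> / (sqrt (real CARD('d)) * L)) * (avg_fun n f (w t) - avg_fun n f wstar)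
             + \<eta> / (2 * \<alpha>) * (norm (avg_grad n g (w t) - v t))^2
             - (1 / (2 * \<eta>) - L / (2 * \<alpha>)) * wnorm2 (Dh t) (w (Suc t) - w t)"
proof -
  let ?\<Gamma> = "sqrt (real CARD('d)) * L"
  have "0 < ?\<Gamma>"
    using alpha_pos alpha_le_Gamma by linarith
  then have "0 \<le> L"
    by (simp add: zero_less_mult_iff)
  have hessian_bound: "\<forall>i<n. \<forall>x h. norm (H i x *v h) \<le> L * norm h"
    using lipschitz_has_derivative_bound hess_f smooth_f by blast
  have sample_bound: "\<bar>hutch (hessJ H J' x) z' $ k\<bar> \<le> ?\<Gamma>"
    if "J' \<subseteq> {..<n}" "J' \<noteq> {}" "\<forall>k. z' $ k \<in> {-1, 1}" for J' x z' k
    using that hessian_bound finite_subset[OF that(1)]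
    by (intro abs_hutch_le allI norm_hessJ_mult_le) auto
  have "\<bar>D t $ k\<bar> \<le> ?\<Gamma>" for k
    using m_pos beta J0_idx J_idx z0_rad z_rad
    by (intro abs_moving_average_le[OF _ _ _ _ _ D_0 D_Suc]) (auto intro!: sample_bound)
  then have "\<forall>k. \<alpha> \<le> Dh t $ k \<and> Dh t $ k \<le> ?\<Gamma>"
    using Dh_def alpha_le_Gamma by auto
  moreover have "\<forall>x. (avg_fun n f has_derivative (\<lambda>h. avg_grad n g x \<bullet> h)) (at x)"
    using grad_f by (blast intro: avg_fun_has_derivative)
  moreover have "2 * \<mu> * (avg_fun n f (w t) - avg_fun n f wstar) \<le> (norm (avg_grad n g (w t)))\<^sup>2"
    using PL by blast
  ultimately show ?thesis
    using preconditioned_step_bound[OF _ smooth_P _ _ alpha_pos eta_pos \<open>0 \<le> L\<close> w_Suc[rule_format]]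
    by blast
qed

end
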